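(* Let $K\subseteq\mathcal I_{int}$ be finite, let $A=(Q,\mathsf{init},2^{\Sigma\cup K\cup\{\mathsf{anch}\}},\delta,F)$ be an NFA whose language consists of collapsed $K$-interval words over $\Sigma$, and let $\mathsf{seq}$ be a type over $K$. Then every word accepted by $A_{\mathsf{seq}}$ is a normalized word of type $\mathsf{seq}$, i.e. $L(A_{\mathsf{seq}})\subseteq\mathsf{Norm}(W_{\mathsf{seq}})$.
   Context: Fix a finite set $\Sigma$ of propositions; $\mathcal I_{int}$ is the set of open, half-open or closed real intervals with endpoints in $\mathbb Z\cup\{-\infty,\infty\}$. Interval words: for finite $K\subseteq\mathcal I_{int}$ and a fresh symbol $\mathsf{anch}$, a $K$-interval word over $\Sigma$ is a finite word $w=a_1\cdots a_n$ with $a_j\subseteq\Sigma\cup K\cup\{\mathsf{anch}\}$ such that exactly one position $i$, denoted $\mathsf{anch}(w)$, has $\mathsf{anch}\in a_i$, and $a_i\subseteq\Sigma\cup\{\mathsf{anch}\}$ there. Position $j$ is $I$-time restricted iff $I\in a_j$. $w$ is collapsed iff every $a_j$ contains at most one element of $K$. $\mathsf{first}(w,I)$, $\mathsf{last}(w,I)$ are the least and greatest $I$-time restricted positions ($\bot$ if none). For a collapsed $K$-interval word $w$, $\mathsf{Norm}(w)$ is the $K$-interval word $b_1\cdots b_n$ with $b_j\cap(\Sigma\cup\{\mathsf{anch}\})=a_j\cap(\Sigma\cup\{\mathsf{anch}\})$ and, for $I\in K$, $I\in b_j$ iff $j\in\{\mathsf{first}(w,I),\mathsf{last}(w,I)\}$;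 for a set $L$ of words, $\mathsf{Norm}(L)=\{\mathsf{Norm}(w):w\in L\}$. Types: for a collapsed $K$-interval word $w$, let $\mathsf{Boundary}(w)$ be the set of positions that are $\mathsf{anch}(w)$ or equal to $\mathsf{first}(w,I)$ or $\mathsf{last}(w,I)$ for some $I\in K$; listing them as $p_1<\dots<p_m$, the type of $w$ is the word $c_1\cdots c_m$ over $K\cup\{\mathsf{anch}\}$ where $c_k$ is the unique element of $a_{p_k}\setminus\Sigma$. A type over $K$ is any word over $K\cup\{\mathsf{anch}\}$ arising this way (it contains $\mathsf{anch}$ exactly once and each $I\in K$ at most twice). $W_{\mathsf{seq}}$ is the set of collapsed $K$-interval words of type $\mathsf{seq}$. The automaton $A_{\mathsf{seq}}$: for $A$ as in the claim and a type $\mathsf{seq}=c_1\cdots c_m$, $A_{\mathsf{seq}}=(Q\times\{1,\dots,m+1\},(\mathsf{init},1),2^{\Sigma\cup K\cup\{\mathsf{anch}\}},\delta_{\mathsf{seq}},F\times\{m+1\})$ where, for $q\in Q$ and a letter $S$: for $1\le i\le m$, (i) if $c_i\in S$ then $\delta_{\mathsf{seq}}((q,i),S)=\delta(q,S)\times\{i+1\}$; (ii) if $c_i\notin S$ and $S\not\subseteq\Sigma$ then $\delta_{\mathsf{seq}}((q,i),S)=\emptyset$; (iii) if $S\subseteq\Sigma$ then $\delta_{\mathsf{seq}}((q,i),S)=\big(\delta(q,S)\cup\bigcup_{I'\in K_i}\delta(q,S\cup\{I'\})\big)\times\{i\}$, where $K_i=\{I'\in K:\exists i'<i\le i''\text{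 with }c_{i'}=c_{i''}=I'\}$; and $\delta_{\mathsf{seq}}((q,m+1),S)=\delta(q,S)\times\{m+1\}$ if $S\subseteq\Sigma$ and $\emptyset$ otherwise. *)

theory Defs
  imports Complex_Main
begin

fun lower_ok :: "int option \<Rightarrow> bool \<Rightarrow> real \<Rightarrow> bool" where
  "lower_ok None _ x = True"
| "lower_ok (Some a) cl x = (if cl then real_of_int a \<le> x else real_of_int a < x)"

fun upper_ok :: "int option \<Rightarrow> bool \<Rightarrow> real \<Rightarrow> bool" where
  "upper_ok None _ x = True"
| "upper_ok (Some b) cl x = (if cl then x \<le> real_of_int b else x < real_of_int b)"

definition I_int :: "real set set" where
  "I_int = {I. \<exists>lo lc hi hc. I = {x. lower_ok lo lc x \<and> upper_ok hi hc x}}"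

datatype 'p sym = Prop 'p | Itv "real set" | Anch

definition alphabet :: "'p set \<Rightarrow> real set set \<Rightarrow> 'p sym set set" where
  "alphabet \<Sigma> K = Pow (Prop ` \<Sigma> \<union> Itv ` K \<union> {Anch})"

text \<open>Words are lists; positions are 0-based indices.\<close>

definition interval_word :: "'p set \<Rightarrow> real set set \<Rightarrow> 'p sym set list \<Rightarrow> bool" where
  "interval_word \<Sigma> K w \<longleftrightarrow>
     (\<forall>j<length w. w ! j \<subseteq> Prop ` \<Sigma> \<union> Itv ` K \<union> {Anch}) \<and>
     (\<exists>!i. i < length w \<and> Anch \<in> w ! i) \<and>
     (\<forall>i<length w. Anch \<in> w ! i \<longrightarrow> w ! i \<subseteq> Prop ` \<Sigma> \<union> {Anch})"

definition anch_pos :: "'p sym set list \<Rightarrow> nat" where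
  "anch_pos w = (THE i. i < length w \<and> Anch \<in> w ! i)"

definition collapsed :: "real set set \<Rightarrow> 'p sym set list \<Rightarrow> bool" where
  "collapsed K w \<longleftrightarrow> (\<forall>j<length w. card (w ! j \<inter> Itv ` K) \<le> 1)"

definition collapsed_iword :: "'p set \<Rightarrow> real set set \<Rightarrow> 'p sym set list \<Rightarrow> bool" where
  "collapsed_iword \<Sigma> K w \<longleftrightarrow> interval_word \<Sigma> K w \<and> collapsed K w"

definition restricted :: "'p sym set list \<Rightarrow> real set \<Rightarrow> nat set" where
  "restricted w I = {j. j < length w \<and> Itv I \<in> w ! j}"

definition first_pos :: "'p sym set list \<Rightarrow> real set \<Rightarrow> nat option" where
  "first_pos w I = (if restricted w I = {} then None else Some (Min (restricted w I)))"

definition last_pos :: "'p sym set list \<Rightarrow> real set \<Rightarrow> nat option" where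
  "last_pos w I = (if restricted w I = {} then None else Some (Max (restricted w I)))"

definition Norm :: "'p set \<Rightarrow> real set set \<Rightarrow> 'p sym set list \<Rightarrow> 'p sym set list" where
  "Norm \<Sigma> K w = map (\<lambda>j. (w ! j \<inter> (Prop ` \<Sigma> \<union> {Anch})) \<union>
        {Itv I | I. I \<in> K \<and> (first_pos w I = Some j \<or> last_pos w I = Some j)}) [0..<length w]"

definition Boundary :: "real set set \<Rightarrow> 'p sym set list \<Rightarrow> nat set" where
  "Boundary K w = {anch_pos w} \<union> {j. \<exists>I\<in>K. first_pos w I = Some j \<or> last_pos w I = Some j}"

definition type_of :: "'p set \<Rightarrow> real set set \<Rightarrow> 'p sym set list \<Rightarrow> 'p sym list" where
  "type_of \<Sigma> K w = map (\<lambda>p. the_elem (w ! p - Prop ` \<Sigma>)) (sorted_list_of_set (Boundary K w))"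

definition is_type :: "'p set \<Rightarrow> real set set \<Rightarrow> 'p sym list \<Rightarrow> bool" where
  "is_type \<Sigma> K seq \<longleftrightarrow> (\<exists>w. collapsed_iword \<Sigma> K w \<and> type_of \<Sigma> K w = seq)"

definition W_seq :: "'p set \<Rightarrow> real set set \<Rightarrow> 'p sym list \<Rightarrow> 'p sym set list set" where
  "W_seq \<Sigma> K seq = {w. collapsed_iword \<Sigma> K w \<and> type_of \<Sigma> K w = seq}"

definition nfa :: "'q set \<Rightarrow> 'q \<Rightarrow> 'a set \<Rightarrow> ('q \<Rightarrow> 'a \<Rightarrow> 'q set) \<Rightarrow> 'q set \<Rightarrow> bool" where
  "nfa Q init Alph \<delta> F \<longleftrightarrow> finite Q \<and> finite Alph \<and> init \<in> Q \<and> F \<subseteq> Q \<and>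
     (\<forall>q\<in>Q. \<forall>a\<in>Alph. \<delta> q a \<subseteq> Q)"

fun steps :: "('q \<Rightarrow> 'a \<Rightarrow> 'q set) \<Rightarrow> 'q set \<Rightarrow> 'a list \<Rightarrow> 'q set" where
  "steps \<delta> S [] = S"
| "steps \<delta> S (a # w) = steps \<delta> (\<Union>q\<in>S. \<delta> q a) w"

definition nfa_lang :: "'q \<Rightarrow> 'a set \<Rightarrow> ('q \<Rightarrow> 'a \<Rightarrow> 'q set) \<Rightarrow> 'q set \<Rightarrow> 'a list set" where
  "nfa_lang init Alph \<delta> F = {w. set w \<subseteq> Alph \<and> steps \<delta> {init} w \<inter> F \<noteq> {}}"

text \<open>Positions i of seq are 1-based here: c_i = seq ! (i - 1).\<close>

definition K_i :: "real set set \<Rightarrow> 'p sym list \<Rightarrow> nat \<Rightarrow> real set set" where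
  "K_i K seq i = {I'\<in>K. \<exists>i' i''. 1 \<le> i' \<and> i' < i \<and> i \<le> i'' \<and> i'' \<le> length seq \<and>
       seq ! (i' - 1) = Itv I' \<and> seq ! (i'' - 1) = Itv I'}"

definition delta_seq :: "'p set \<Rightarrow> real set set \<Rightarrow> 'p sym list \<Rightarrow> ('q \<Rightarrow> 'p sym set \<Rightarrow> 'q set)
     \<Rightarrow> 'q \<times> nat \<Rightarrow> 'p sym set \<Rightarrow> ('q \<times> nat) set" where
  "delta_seq \<Sigma> K seq \<delta> qi S = (case qi of (q, i) \<Rightarrow>
     if 1 \<le> i \<and> i \<le> length seq then
       (if seq ! (i - 1) \<in> S then \<delta> q S \<times> {i + 1}
        else if \<not> S \<subseteq> Prop ` \<Sigma> then {}
        else (\<delta> q S \<union> (\<Union>I'\<in>K_i K seq i. \<delta> q (S \<union> {Itv I'}))) \<times> {i})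
     else if i = length seq + 1 then
       (if S \<subseteq> Prop ` \<Sigma> then \<delta> q S \<times> {length seq + 1} else {})
     else {})"

end

theory Submission
  imports Defs
begin

text \<open>
  Read letter by letter, an accepting run of \<open>A\<^sub>seq\<close> on \<open>x\<close> is a run of \<open>A\<close> on a word \<open>w\<close>
  obtained from \<open>x\<close> by adding one interval label \<open>I' \<in> K\<^sub>i\<close> at some of the positions where the
  phase counter \<open>i\<close> stays put. Since \<open>A\<close> accepts \<open>w\<close>, it is a collapsed interval word. The counter
  advances exactly at the positions reading the next letter \<open>c\<^sub>i\<close> of \<open>seq\<close>, and since \<open>seq\<close>
  contains each \<open>I\<close> at most twice, at most two advancing positions carry \<open>I\<close>. A label \<open>I\<close> added by
  the \<open>K\<^sub>i\<close>-rule lies strictly between two advancing positions carrying \<open>I\<close>, so these are exactly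
  \<open>first(w, I)\<close> and \<open>last(w, I)\<close>. Hence the advancing positions form \<open>Boundary(w)\<close>, which gives
  \<open>type(w) = seq\<close> and \<open>Norm(w) = x\<close>.
\<close>

lemma steps_UN: "steps d S w = (\<Union>q\<in>S. steps d {q} w)"
proof (induction w arbitrary: S)
  case Nil
  then show ?case by simp
next
  case (Cons a w)
  have singleton: "steps d {q} (a # w) = (\<Union>p\<in>d q a. steps d {p} w)" for q
    using Cons.IH[of "d q a"] by simp
  have "steps d S (a # w) = (\<Union>p\<in>(\<Union>q\<in>S. d q a). steps d {p} w)"
    using Cons.IH[of "\<Union>q\<in>S. d q a"] by simp
  also have "\<dots> = (\<Union>q\<in>S. steps d {q} (a # w))"
    by (simp only: singleton UN_UN_flatten)
  finally show ?case .
qed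

lemma steps_singleton_Cons: "steps d {q} (a # w) = (\<Union>p\<in>d q a. steps d {p} w)"
  using steps_UN[of d "d q a" w] by simp

lemma unit_steps_mono:
  assumes "a \<le> b" and "\<And>j. a \<le> j \<Longrightarrow> j < b \<Longrightarrow> g j \<le> g (Suc j)"
  shows "g a \<le> (g b :: nat)"
  using assms by (induction b rule: dec_induct) (auto intro: order_trans)

lemma unit_steps_crossing:
  assumes "a \<le> b" and "\<And>j. a \<le> j \<Longrightarrow> j < b \<Longrightarrow> g (Suc j) \<le> Suc (g j)"
    and "g a \<le> v" and "v < g b"
  shows "\<exists>p. a \<le> p \<and> p < b \<and> g p = v \<and> g (Suc p) = Suc v"
  using assms
proof (induction b rule: dec_induct)
  case base
  then show ?case by simp
next
  case (step b)
  show ?case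
  proof (cases "v < g b")
    case True
    then show ?thesis using step by (metis less_SucI)
  next
    case False
    then have "g b = v" "g (Suc b) = Suc v"
      using step.prems(1)[of b] step.prems(3) step.hyps by auto
    then show ?thesis using step.hyps by auto
  qed
qed

lemma anch_pos_nth:
  assumes "interval_word \<Sigma> K w"
  shows "anch_pos w < length w \<and> Anch \<in> w ! anch_pos w"
proof -
  have "\<exists>!i. i < length w \<and> Anch \<in> w ! i" using assms unfolding interval_word_def by blast
  then show ?thesis unfolding anch_pos_def by (rule theI')
qed

lemma anch_pos_eqI:
  assumes "interval_word \<Sigma> K w" and "i < length w" and "Anch \<in> w ! i"
  shows "anch_pos w = i"
  using assms anch_pos_nth[OF assms(1)] unfolding interval_word_def by blast

lemma finite_restricted: "finite (restricted w I)"
  unfolding restricted_def by auto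

lemma first_pos_restricted: "first_pos w I = Some j \<Longrightarrow> j \<in> restricted w I"
  unfolding first_pos_def by (auto split: if_splits intro: Min_in finite_restricted)

lemma last_pos_restricted: "last_pos w I = Some j \<Longrightarrow> j \<in> restricted w I"
  unfolding last_pos_def by (auto split: if_splits intro: Max_in finite_restricted)

lemma nonprop_part_Anch:
  assumes "collapsed_iword \<Sigma> K w" and "p < length w" and "Anch \<in> w ! p"
  shows "w ! p - Prop ` \<Sigma> = {Anch}"
  using assms unfolding collapsed_iword_def interval_word_def by auto

lemma nonprop_part_Itv:
  assumes "finite K" and "collapsed_iword \<Sigma> K w" and "p < length w" and "I \<in> K"
    and "Itv I \<in> w ! p"
  shows "w ! p - Prop ` \<Sigma> = {Itv I}"
proof -
  have letter: "w ! p \<subseteq> Prop ` \<Sigma> \<union> Itv ` K \<union> {Anch}" "Anch \<notin> w ! p"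
    using assms(2,3,5) unfolding collapsed_iword_def interval_word_def by auto
  have "card (w ! p \<inter> Itv ` K) \<le> 1"
    using assms(2,3) unfolding collapsed_iword_def collapsed_def by auto
  with assms(1) have "\<forall>a\<in>w ! p \<inter> Itv ` K. \<forall>b\<in>w ! p \<inter> Itv ` K. a = b"
    by (simp add: card_le_Suc0_iff_eq)
  with assms(4,5) have "w ! p \<inter> Itv ` K = {Itv I}" by blast
  with letter show ?thesis by auto
qed

lemma Boundary_nonprop_part:
  assumes "finite K" and "collapsed_iword \<Sigma> K w" and "p \<in> Boundary K w"
  shows "p < length w \<and> (w ! p - Prop ` \<Sigma> = {Anch} \<or>
     (\<exists>I\<in>K. w ! p - Prop ` \<Sigma> = {Itv I} \<and> (first_pos w I = Some p \<or> last_pos w I = Some p)))"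
proof -
  from assms(3) consider "p = anch_pos w"
    | I where "I \<in> K" "first_pos w I = Some p \<or> last_pos w I = Some p"
    unfolding Boundary_def by blast
  then show ?thesis
  proof cases
    case 1
    with assms(2) show ?thesis
      using anch_pos_nth nonprop_part_Anch unfolding collapsed_iword_def by blast
  next
    case 2
    then have "p < length w" "Itv I \<in> w ! p"
      using first_pos_restricted last_pos_restricted unfolding restricted_def by blast+
    with 2 assms(1,2) show ?thesis using nonprop_part_Itv by blast
  qed
qed

lemma finite_Boundary:
  assumes "finite K" and "collapsed_iword \<Sigma> K w"
  shows "finite (Boundary K w)"
  using Boundary_nonprop_part[OF assms] by (meson finite_lessThan finite_subset lessThan_iff subsetI)

lemma set_type_of:
  assumes "finite K" and "collapsed_iword \<Sigma> K w"
  shows "set (type_of \<Sigma> K w) \<subseteq> insert Anch (Itv ` K)"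
  using Boundary_nonprop_part[OF assms] finite_Boundary[OF assms]
  unfolding type_of_def by force

lemma type_of_Itv_occurrences:
  assumes "finite K" and "collapsed_iword \<Sigma> K w"
  shows "card {i. i < length (type_of \<Sigma> K w) \<and> type_of \<Sigma> K w ! i = Itv I} \<le> 2"
proof -
  define L where "L = sorted_list_of_set (Boundary K w)"
  define occ where "occ = {i. i < length (type_of \<Sigma> K w) \<and> type_of \<Sigma> K w ! i = Itv I}"
  have L: "set L = Boundary K w" "distinct L"
    using finite_Boundary[OF assms] unfolding L_def by auto
  have ty: "type_of \<Sigma> K w = map (\<lambda>p. the_elem (w ! p - Prop ` \<Sigma>)) L"
    unfolding type_of_def L_def ..
  have "(!) L ` occ \<subseteq> {the (first_pos w I), the (last_pos w I)}"
  proof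
    fix p assume "p \<in> (!) L ` occ"
    then obtain i where i: "i < length L" "the_elem (w ! (L ! i) - Prop ` \<Sigma>) = Itv I" "p = L ! i"
      unfolding occ_def ty by auto
    then have "L ! i \<in> Boundary K w" using L(1) nth_mem by blast
    with i(2,3) show "p \<in> {the (first_pos w I), the (last_pos w I)}"
      using Boundary_nonprop_part[OF assms] by fastforce
  qed
  moreover have "inj_on ((!) L) occ"
    using L(2) unfolding occ_def ty inj_on_def by (simp add: nth_eq_iff_index_eq)
  ultimately have "card occ \<le> card {the (first_pos w I), the (last_pos w I)}"
    by (intro card_inj_on_le) auto
  also have "\<dots> \<le> 2" by (simp add: card_insert_if)
  finally show ?thesis unfolding occ_def .
qed

subsection \<open>Projecting runs of \<open>A\<^sub>seq\<close> to runs of \<open>A\<close>\<close>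

text \<open>
  \<open>A\<^sub>seq\<close> reads \<open>a\<close> in phase \<open>i\<close> while \<open>A\<close> reads \<open>a'\<close>, and the phase becomes \<open>i'\<close>.
\<close>
definition seq_move ::
    "'p set \<Rightarrow> real set set \<Rightarrow> 'p sym list \<Rightarrow> 'p sym set \<Rightarrow> 'p sym set \<Rightarrow> nat \<Rightarrow> nat \<Rightarrow> bool" where
  "seq_move \<Sigma> K seq a a' i i' \<longleftrightarrow>
     (1 \<le> i \<and> i \<le> length seq \<and> seq ! (i - 1) \<in> a \<and> a' = a \<and> i' = Suc i) \<or>
     (a \<subseteq> Prop ` \<Sigma> \<and> i' = i \<and> (a' = a \<or> (\<exists>I\<in>K_i K seq i. a' = a \<union> {Itv I})))"

lemma delta_seq_move:
  assumes "(q', i') \<in> delta_seq \<Sigma> K seq \<delta> (q, i) a"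
  shows "\<exists>a'. q' \<in> \<delta> q a' \<and> seq_move \<Sigma> K seq a a' i i'"
  using assms unfolding delta_seq_def seq_move_def by (auto split: if_splits)

lemma steps_delta_seq_projects:
  assumes "(q', i') \<in> steps (delta_seq \<Sigma> K seq \<delta>) {(q, i)} x"
  shows "\<exists>w g. length w = length x \<and> q' \<in> steps \<delta> {q} w \<and> g 0 = i \<and> g (length x) = i' \<and>
     (\<forall>j<length x. seq_move \<Sigma> K seq (x ! j) (w ! j) (g j) (g (Suc j)))"
  using assms
proof (induction x arbitrary: q i)
  case Nil
  then show ?case by (intro exI[of _ "[]"] exI[of _ "\<lambda>_. i"]) auto
next
  case (Cons a x)
  obtain p k where first: "(p, k) \<in> delta_seq \<Sigma> K seq \<delta> (q, i) a"
    and rest: "(q', i') \<in> steps (delta_seq \<Sigma> K seq \<delta>) {(p, k)} x"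
    using Cons.prems unfolding steps_singleton_Cons by auto
  obtain a' where a': "p \<in> \<delta> q a'" "seq_move \<Sigma> K seq a a' i k"
    using delta_seq_move[OF first] by blast
  obtain w g where w: "length w = length x" "q' \<in> steps \<delta> {p} w" "g 0 = k" "g (length x) = i'"
    "\<forall>j<length x. seq_move \<Sigma> K seq (x ! j) (w ! j) (g j) (g (Suc j))"
    using Cons.IH[OF rest] by blast
  define g' where "g' j = (case j of 0 \<Rightarrow> i | Suc j \<Rightarrow> g j)" for j
  have "q' \<in> steps \<delta> {q} (a' # w)"
    using a'(1) w(2) unfolding steps_singleton_Cons by blast
  moreover have "\<forall>j<length (a # x). seq_move \<Sigma> K seq ((a # x) ! j) ((a' # w) ! j) (g' j) (g' (Suc j))"
    using a'(2) w(3,5) by (auto simp: g'_def less_Suc_eq_0_disj)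
  ultimately show ?case
    using w(1,4) by (intro exI[of _ "a' # w"] exI[of _ g']) (auto simp: g'_def)
qed

lemma seq_moves_alphabet:
  assumes "set x \<subseteq> alphabet \<Sigma> K" and "length w = length x"
    and "\<forall>j<length x. seq_move \<Sigma> K seq (x ! j) (w ! j) (g j) (g (Suc j))"
  shows "set w \<subseteq> alphabet \<Sigma> K"
proof
  fix b assume "b \<in> set w"
  then obtain j where j: "j < length x" "b = w ! j" using assms(2) by (auto simp: in_set_conv_nth)
  then have "x ! j \<in> alphabet \<Sigma> K" using assms(1) nth_mem by blast
  moreover have "w ! j = x ! j \<or> (\<exists>I\<in>K_i K seq (g j). w ! j = x ! j \<union> {Itv I})"
    using assms(3) j(1) unfolding seq_move_def by auto
  moreover have "K_i K seq (g j) \<subseteq> K" unfolding K_i_def by blast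
  ultimately show "b \<in> alphabet \<Sigma> K"
    using j(2) unfolding alphabet_def Pow_iff by blast
qed

subsection \<open>The projected word has type \<open>seq\<close> and normalizes back\<close>

text \<open>
  \<open>g j\<close> is the phase of an accepting run of \<open>A\<^sub>seq\<close> on \<open>x\<close> before reading \<open>x ! j\<close>, and \<open>w\<close> is the
  word read meanwhile by \<open>A\<close>.
\<close>
locale seq_run =
  fixes \<Sigma> :: "'p set" and K :: "real set set" and seq :: "'p sym list"
    and x w :: "'p sym set list" and g :: "nat \<Rightarrow> nat"
  assumes finite_K: "finite K"
    and type_seq: "is_type \<Sigma> K seq"
    and alphabet_x: "set x \<subseteq> alphabet \<Sigma> K"
    and length_w: "length w = length x"
    and g_0: "g 0 = 1"
    and g_length: "g (length x) = Suc (length seq)"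
    and moves: "\<forall>j<length x. seq_move \<Sigma> K seq (x ! j) (w ! j) (g j) (g (Suc j))"
    and collapsed_w: "collapsed_iword \<Sigma> K w"
begin

definition advancing :: "nat set" where
  "advancing = {j. j < length x \<and> g (Suc j) = Suc (g j)}"

definition expected :: "nat \<Rightarrow> 'p sym" where
  "expected j = seq ! (g j - 1)"

definition marked :: "real set \<Rightarrow> nat set" where
  "marked I = {j \<in> advancing. expected j = Itv I}"

lemma advancingD:
  "j \<in> advancing \<Longrightarrow> j < length x \<and> 1 \<le> g j \<and> g j \<le> length seq \<and> expected j \<in> x ! j \<and> w ! j = x ! j"
  using moves unfolding advancing_def expected_def seq_move_def by auto

lemma not_advancingD:
  "j < length x \<Longrightarrow> j \<notin> advancing \<Longrightarrow> x ! j \<subseteq> Prop ` \<Sigma> \<and> g (Suc j) = g j \<and>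
    (w ! j = x ! j \<or> (\<exists>I\<in>K_i K seq (g j). w ! j = x ! j \<union> {Itv I}))"
  using moves unfolding advancing_def seq_move_def by auto

lemma g_Suc: "j < length x \<Longrightarrow> g (Suc j) = g j \<or> g (Suc j) = Suc (g j)"
  using moves unfolding seq_move_def by auto

lemma g_mono:
  assumes "j \<le> k" and "k \<le> length x"
  shows "g j \<le> g k"
proof (rule unit_steps_mono[OF assms(1)])
  show "g i \<le> g (Suc i)" if "i < k" for i using that assms(2) g_Suc[of i] by auto
qed

lemma g_crossing:
  assumes "j \<le> k" and "k \<le> length x" and "g j \<le> v" and "v < g k"
  shows "\<exists>p. j \<le> p \<and> p < k \<and> g p = v \<and> g (Suc p) = Suc v"
proof (rule unit_steps_crossing[OF assms(1) _ assms(3,4)])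
  show "g (Suc i) \<le> Suc (g i)" if "i < k" for i using that assms(2) g_Suc[of i] by auto
qed

lemma g_strict_mono_on_advancing: "j \<in> advancing \<Longrightarrow> k \<in> advancing \<Longrightarrow> j < k \<Longrightarrow> g j < g k"
  using g_mono[of "Suc j" k] advancingD[of k] unfolding advancing_def by auto

lemma expected_cases: "j \<in> advancing \<Longrightarrow> expected j = Anch \<or> (\<exists>I\<in>K. expected j = Itv I)"
proof -
  assume "j \<in> advancing"
  then have "expected j \<in> set seq" using advancingD[of j] unfolding expected_def by auto
  moreover obtain v where "collapsed_iword \<Sigma> K v" "type_of \<Sigma> K v = seq"
    using type_seq unfolding is_type_def by blast
  ultimately show ?thesis using set_type_of[OF finite_K] by blast
qed

lemma nonprop_part_advancing:
  assumes "j \<in> advancing"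
  shows "w ! j - Prop ` \<Sigma> = {expected j}"
proof -
  have j: "j < length w" "expected j \<in> w ! j" using advancingD[OF assms] length_w by auto
  from expected_cases[OF assms] show ?thesis
  proof
    assume "expected j = Anch"
    with j show ?thesis using nonprop_part_Anch[OF collapsed_w] by simp
  next
    assume "\<exists>I\<in>K. expected j = Itv I"
    then obtain I where "I \<in> K" "expected j = Itv I" by blast
    with j show ?thesis using nonprop_part_Itv[OF finite_K collapsed_w] by simp
  qed
qed

lemma finite_marked: "finite (marked I)"
  by (rule finite_subset[of _ "{..<length x}"]) (auto simp: marked_def advancing_def)

lemma card_marked: "card (marked I) \<le> 2"
proof -
  have "inj_on (\<lambda>j. g j - 1) (marked I)"
  proof (rule inj_onI)
    fix j k assume jk: "j \<in> marked I" "k \<in> marked I" "g j - 1 = g k - 1"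
    then have "g j = g k" using advancingD[of j] advancingD[of k] unfolding marked_def by auto
    with jk show "j = k"
      using g_strict_mono_on_advancing[of j k] g_strict_mono_on_advancing[of k j]
      unfolding marked_def by (metis (no_types, lifting) linorder_neq_iff mem_Collect_eq less_irrefl)
  qed
  moreover have "(\<lambda>j. g j - 1) ` marked I \<subseteq> {i. i < length seq \<and> seq ! i = Itv I}"
    using advancingD unfolding marked_def expected_def by force
  ultimately have "card (marked I) \<le> card {i. i < length seq \<and> seq ! i = Itv I}"
    by (intro card_inj_on_le) auto
  also have "\<dots> \<le> 2"
    using type_seq type_of_Itv_occurrences[OF finite_K] unfolding is_type_def by blast
  finally show ?thesis .
qed

lemma marked_restricted: "marked I \<subseteq> restricted w I"
  using advancingD length_w unfolding marked_def restricted_def by force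

lemma restricted_between_marked:
  assumes "I \<in> K" and "j \<in> restricted w I" and "j \<notin> marked I"
  shows "\<exists>p\<in>marked I. p < j" and "\<exists>p\<in>marked I. j < p"
proof -
  have j: "j < length x" "Itv I \<in> w ! j" using assms(2) length_w unfolding restricted_def by auto
  have "j \<notin> advancing"
  proof
    assume adv: "j \<in> advancing"
    have "Itv I \<in> w ! j - Prop ` \<Sigma>" using j(2) by auto
    then have "expected j = Itv I" using nonprop_part_advancing[OF adv] by simp
    with adv assms(3) show False unfolding marked_def by simp
  qed
  note j_moves = not_advancingD[OF j(1) this]
  then have "I \<in> K_i K seq (g j)" using j(2) by auto
  then obtain i' i'' where i: "1 \<le> i'" "i' < g j" "g j \<le> i''" "i'' \<le> length seq"
    "seq ! (i' - 1) = Itv I" "seq ! (i'' - 1) = Itv I"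
    unfolding K_i_def by blast
  obtain p where p: "p < j" "g p = i'" "g (Suc p) = Suc i'"
    using g_crossing[of 0 j i'] i g_0 j(1) by auto
  with i j(1) have "p \<in> marked I" unfolding marked_def advancing_def expected_def by auto
  with p(1) show "\<exists>p\<in>marked I. p < j" ..
  obtain p where p: "j \<le> p" "p < length x" "g p = i''" "g (Suc p) = Suc i''"
    using g_crossing[of j "length x" i''] i g_length j(1) by auto
  with i have "p \<in> marked I" unfolding marked_def advancing_def expected_def by auto
  moreover have "j < p" using p j_moves i(3) by (metis le_neq_implies_less n_not_Suc_n)
  ultimately show "\<exists>p\<in>marked I. j < p" ..
qed

lemma extremes_marked:
  assumes "I \<in> K" and "restricted w I \<noteq> {}"
  shows "Min (restricted w I) \<in> marked I" and "Max (restricted w I) \<in> marked I"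
  using restricted_between_marked[OF assms(1)] marked_restricted finite_restricted assms(2)
  by (meson Min_in Min_le Max_in Max_ge leD subsetD)+

lemma first_last_pos_iff_marked:
  assumes "I \<in> K"
  shows "first_pos w I = Some j \<or> last_pos w I = Some j \<longleftrightarrow> j \<in> marked I"
proof
  assume "first_pos w I = Some j \<or> last_pos w I = Some j"
  then show "j \<in> marked I"
    using extremes_marked[OF assms] unfolding first_pos_def last_pos_def by (auto split: if_splits)
next
  assume j: "j \<in> marked I"
  let ?S = "restricted w I"
  have "j \<in> ?S" using j marked_restricted by blast
  then have ne: "?S \<noteq> {}" and "Min ?S \<le> j" "j \<le> Max ?S"
    using Min_le[OF finite_restricted] Max_ge[OF finite_restricted] by auto
  moreover have "\<not> (Min ?S < j \<and> j < Max ?S)"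
  proof
    assume "Min ?S < j \<and> j < Max ?S"
    then have "card {Min ?S, j, Max ?S} = 3" by auto
    moreover have "{Min ?S, j, Max ?S} \<subseteq> marked I"
      using extremes_marked[OF assms ne] j by blast
    ultimately have "3 \<le> card (marked I)" using card_mono[OF finite_marked] by metis
    then show False using card_marked[of I] by simp
  qed
  ultimately show "first_pos w I = Some j \<or> last_pos w I = Some j"
    unfolding first_pos_def last_pos_def by auto
qed

lemma interval_labels_eq_marked:
  assumes "j < length x"
  shows "x ! j \<inter> Itv ` K = {Itv I | I. I \<in> K \<and> j \<in> marked I}"
proof (intro equalityI subsetI)
  fix b assume b: "b \<in> x ! j \<inter> Itv ` K"
  then obtain I where I: "I \<in> K" "b = Itv I" by blast
  have adv: "j \<in> advancing" using not_advancingD[OF assms] b by auto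
  have "Itv I \<in> w ! j - Prop ` \<Sigma>" using advancingD[OF adv] b I by auto
  then have "expected j = Itv I" using nonprop_part_advancing[OF adv] by simp
  with adv I show "b \<in> {Itv I | I. I \<in> K \<and> j \<in> marked I}" unfolding marked_def by auto
next
  fix b :: "'p sym" assume "b \<in> {Itv I | I. I \<in> K \<and> j \<in> marked I}"
  then show "b \<in> x ! j \<inter> Itv ` K" using advancingD unfolding marked_def by force
qed

lemma Norm_w: "Norm \<Sigma> K w = x"
proof (rule nth_equalityI)
  show "length (Norm \<Sigma> K w) = length x" unfolding Norm_def using length_w by simp
next
  fix j assume "j < length (Norm \<Sigma> K w)"
  then have j: "j < length x" unfolding Norm_def using length_w by simp
  have labels: "{Itv I | I. I \<in> K \<and> (first_pos w I = Some j \<or> last_pos w I = Some j)}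
      = {Itv I | I. I \<in> K \<and> j \<in> marked I}"
    using first_last_pos_iff_marked by blast
  have rest: "w ! j \<inter> (Prop ` \<Sigma> \<union> {Anch}) = x ! j \<inter> (Prop ` \<Sigma> \<union> {Anch})"
    using advancingD[of j] not_advancingD[OF j] by (cases "j \<in> advancing") auto
  have "Norm \<Sigma> K w ! j = (w ! j \<inter> (Prop ` \<Sigma> \<union> {Anch})) \<union>
      {Itv I | I. I \<in> K \<and> (first_pos w I = Some j \<or> last_pos w I = Some j)}"
    unfolding Norm_def using j length_w by simp
  also have "\<dots> = (x ! j \<inter> (Prop ` \<Sigma> \<union> {Anch})) \<union> (x ! j \<inter> Itv ` K)"
    unfolding labels rest interval_labels_eq_marked[OF j] ..
  also have "\<dots> = x ! j"
    using alphabet_x j nth_mem unfolding alphabet_def by blast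
  finally show "Norm \<Sigma> K w ! j = x ! j" .
qed

lemma Boundary_w: "Boundary K w = advancing"
proof (intro equalityI subsetI)
  fix j assume "j \<in> Boundary K w"
  then consider "j = anch_pos w" | I where "I \<in> K" "first_pos w I = Some j \<or> last_pos w I = Some j"
    unfolding Boundary_def by blast
  then show "j \<in> advancing"
  proof cases
    case 1
    then have "j < length x" "Anch \<in> w ! j"
      using anch_pos_nth[of \<Sigma> K w] collapsed_w length_w unfolding collapsed_iword_def by auto
    then show ?thesis using not_advancingD[of j] by auto
  next
    case 2
    then show ?thesis using first_last_pos_iff_marked unfolding marked_def by blast
  qed
next
  fix j assume j: "j \<in> advancing"
  from expected_cases[OF j] show "j \<in> Boundary K w"
  proof
    assume "expected j = Anch"
    then have "anch_pos w = j"
      using advancingD[OF j] length_w collapsed_w anch_pos_eqI[of \<Sigma> K w j]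
      unfolding collapsed_iword_def by auto
    then show ?thesis unfolding Boundary_def by blast
  next
    assume "\<exists>I\<in>K. expected j = Itv I"
    then show ?thesis
      using j first_last_pos_iff_marked unfolding Boundary_def marked_def by blast
  qed
qed

lemma g_advancing: "g ` advancing = {1..length seq}"
proof
  show "g ` advancing \<subseteq> {1..length seq}" using advancingD by auto
next
  show "{1..length seq} \<subseteq> g ` advancing"
  proof
    fix v assume "v \<in> {1..length seq}"
    then obtain p where "p < length x" "g p = v" "g (Suc p) = Suc v"
      using g_crossing[of 0 "length x" v] g_0 g_length by auto
    then show "v \<in> g ` advancing" unfolding advancing_def by auto
  qed
qed

lemma type_of_w: "type_of \<Sigma> K w = seq"
proof -
  define L where "L = sorted_list_of_set advancing"
  have L: "set L = advancing" "sorted_wrt (<) L"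
    using finite_subset[of advancing "{..<length x}"] unfolding L_def advancing_def by auto
  have "sorted_wrt (<) (map g L)"
    unfolding sorted_wrt_map using L by (auto intro: sorted_wrt_mono_rel g_strict_mono_on_advancing)
  then have gL: "map g L = [1..<Suc (length seq)]"
    using g_advancing L(1) by (intro sorted_distinct_set_unique)
      (simp_all add: strict_sorted_iff atLeastLessThanSuc_atLeastAtMost del: upt_Suc)
  have "type_of \<Sigma> K w = map (\<lambda>p. the_elem (w ! p - Prop ` \<Sigma>)) L"
    unfolding type_of_def Boundary_w L_def ..
  also have "\<dots> = map expected L" using nonprop_part_advancing L(1) by auto
  also have "\<dots> = map (\<lambda>i. seq ! (i - 1)) (map g L)" unfolding expected_def by simp
  also have "\<dots> = seq" unfolding gL by (rule nth_equalityI) (simp_all del: upt_Suc)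
  finally show ?thesis .
qed

end

theorem proposition3:
  fixes \<Sigma> :: "'p set" and K :: "real set set"
    and Q :: "'q set" and init :: 'q and \<delta> :: "'q \<Rightarrow> 'p sym set \<Rightarrow> 'q set" and F :: "'q set"
    and seq :: "'p sym list"
  assumes "finite \<Sigma>"
    and "finite K" and "K \<subseteq> I_int"
    and "nfa Q init (alphabet \<Sigma> K) \<delta> F"
    and "nfa_lang init (alphabet \<Sigma> K) \<delta> F \<subseteq> {w. collapsed_iword \<Sigma> K w}"
    and "is_type \<Sigma> K seq"
  shows "nfa_lang (init, 1) (alphabet \<Sigma> K) (delta_seq \<Sigma> K seq \<delta>) (F \<times> {length seq + 1})
           \<subseteq> Norm \<Sigma> K ` W_seq \<Sigma> K seq"
proof
  fix x assume "x \<in> nfa_lang (init, 1) (alphabet \<Sigma> K) (delta_seq \<Sigma> K seq \<delta>) (F \<times> {length seq + 1})"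
  then obtain q where x: "set x \<subseteq> alphabet \<Sigma> K" "q \<in> F"
    "(q, Suc (length seq)) \<in> steps (delta_seq \<Sigma> K seq \<delta>) {(init, 1)} x"
    unfolding nfa_lang_def by auto
  obtain w g where run: "length w = length x" "q \<in> steps \<delta> {init} w" "g 0 = 1"
    "g (length x) = Suc (length seq)"
    "\<forall>j<length x. seq_move \<Sigma> K seq (x ! j) (w ! j) (g j) (g (Suc j))"
    using steps_delta_seq_projects[OF x(3)] by blast
  then have "w \<in> nfa_lang init (alphabet \<Sigma> K) \<delta> F"
    using x seq_moves_alphabet unfolding nfa_lang_def by blast
  then have "collapsed_iword \<Sigma> K w" using assms(5) by blast
  then interpret seq_run \<Sigma> K seq x w g
    using assms(2,6) x(1) run(1,3-5) by unfold_locales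
  have "w \<in> W_seq \<Sigma> K seq" using collapsed_w type_of_w unfolding W_seq_def by blast
  then show "x \<in> Norm \<Sigma> K ` W_seq \<Sigma> K seq" using Norm_w by force
qed

end
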